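(* Let $R$ be a semifield, $\phi:\underline n\to\underline m$ a surjective map of sets, $(X_j)_{j\in\underline m}$ and $(Y_i)_{i\in\underline n}$ families of $R$-convex sets, and for each $j\in\underline m$ let $f_j:\prod_{i\in\phi^{-1}(j)}Y_i\to X_j$ be a $|\phi^{-1}(j)|$-convex map. Then there is a unique convex map $F:\bigotimes_{i\in\underline n}Y_i\to\bigotimes_{j\in\underline m}X_j$ such that $F\circ U_{(Y_i)}=U_{(X_j)}\circ\prod_jf_j$, where $\prod_jf_j:\prod_{i\in\underline n}Y_i\to\prod_{j\in\underline m}X_j$ sends $(y_i)_i$ to $(f_j((y_i)_{i\in\phi^{-1}(j)}))_j$.
   Context: A semifield is a commutative semiring in which every nonzero element is invertible. $D_R$ is the monad on $\mathsf{Set}$ of finitely supported $R$-valued distributions summing to $1$; $R$-convex sets are $D_R$-algebras, convex maps are algebra maps. $\underline n=\{1,\dots,n\}$. A map $\prod_{i\in S}A_i\to Z$ from a product of convex sets is $|S|$-convex if it is convex in each variable separately. $\bigotimes_{i\in\underline n}Y_i$ is the quotient of $D_R(\prod_iY_i)$ by the smallest convex equivalence relation containing $1\bullet(\sum_{k_i}\alpha^i_{k_i}y^i_{k_i})_{i}\sim\sum_{(k_1,\dots,k_n)}\alpha^1_{k_1}\cdots\alpha^n_{k_n}\bullet(y^1_{k_1},\dots,y^n_{k_n})$; $U_{(Y_i)}:\prod_iY_i\to\bigotimes_iY_i$ sends $(y_1,\dots,y_n)$ to $y_1\otimes\cdots\otimes y_n$, the class of $1\bullet(y_1,\dots,y_n)$.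 This map is $n$-convex and every $n$-convex map out of $\prod_iY_i$ factors uniquely through it by a convex map. *)

theory Defs
  imports "HOL-Library.FuncSet"
begin

definition supp :: "('a \<Rightarrow> 'r::zero) \<Rightarrow> 'a set" where
  "supp p = {x. p x \<noteq> 0}"

definition fsdist :: "'a set \<Rightarrow> ('a \<Rightarrow> 'r::comm_semiring_1) set" where
  "fsdist X = {p. finite (supp p) \<and> supp p \<subseteq> X \<and> sum p (supp p) = 1}"

definition delta :: "'a \<Rightarrow> ('a \<Rightarrow> 'r::comm_semiring_1)" where
  "delta x = (\<lambda>y. if y = x then 1 else 0)"

definition Dmap :: "('a \<Rightarrow> 'b) \<Rightarrow> ('a \<Rightarrow> 'r::comm_semiring_1) \<Rightarrow> ('b \<Rightarrow> 'r)" where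
  "Dmap f p = (\<lambda>y. sum p {x \<in> supp p. f x = y})"

definition Dmult :: "(('a \<Rightarrow> 'r::comm_semiring_1) \<Rightarrow> 'r) \<Rightarrow> ('a \<Rightarrow> 'r)" where
  "Dmult P = (\<lambda>x. sum (\<lambda>q. P q * q x) (supp P))"

definition convex_set :: "'a set \<Rightarrow> (('a \<Rightarrow> 'r::comm_semiring_1) \<Rightarrow> 'a) \<Rightarrow> bool" where
  "convex_set X a \<longleftrightarrow>
     (\<forall>p\<in>fsdist X. a p \<in> X) \<and>
     (\<forall>x\<in>X. a (delta x) = x) \<and>
     (\<forall>P\<in>fsdist (fsdist X). a (Dmap a P) = a (Dmult P))"

definition convex_map :: "'a set \<Rightarrow> (('a \<Rightarrow> 'r::comm_semiring_1) \<Rightarrow> 'a)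
     \<Rightarrow> 'b set \<Rightarrow> (('b \<Rightarrow> 'r) \<Rightarrow> 'b) \<Rightarrow> ('a \<Rightarrow> 'b) \<Rightarrow> bool" where
  "convex_map X a Z b f \<longleftrightarrow>
     (\<forall>x\<in>X. f x \<in> Z) \<and> (\<forall>p\<in>fsdist X. f (a p) = b (Dmap f p))"

definition multiconvex :: "'i set \<Rightarrow> ('i \<Rightarrow> 'b set) \<Rightarrow> ('i \<Rightarrow> ('b \<Rightarrow> 'r::comm_semiring_1) \<Rightarrow> 'b)
     \<Rightarrow> 'a set \<Rightarrow> (('a \<Rightarrow> 'r) \<Rightarrow> 'a) \<Rightarrow> (('i \<Rightarrow> 'b) \<Rightarrow> 'a) \<Rightarrow> bool" where
  "multiconvex I Y alg Z b f \<longleftrightarrow>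
     (\<forall>y\<in>PiE I Y. f y \<in> Z) \<and>
     (\<forall>i\<in>I. \<forall>y\<in>PiE I Y. convex_map (Y i) (alg i) Z b (\<lambda>t. f (y(i := t))))"

definition convex_equiv :: "'a set \<Rightarrow> (('a \<Rightarrow> 'r::comm_semiring_1) \<Rightarrow> 'a) \<Rightarrow> ('a \<times> 'a) set \<Rightarrow> bool" where
  "convex_equiv A a E \<longleftrightarrow> equiv A E \<and>
     (\<forall>p\<in>fsdist E. (a (Dmap fst p), a (Dmap snd p)) \<in> E)"

definition quot_alg :: "('a \<times> 'a) set \<Rightarrow> (('a \<Rightarrow> 'r::comm_semiring_1) \<Rightarrow> 'a)
     \<Rightarrow> (('a set \<Rightarrow> 'r) \<Rightarrow> 'a set)" where
  "quot_alg E a Q = E `` {a (Dmap (\<lambda>c. SOME x. x \<in> c) Q)}"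

definition prod_dist :: "'i set \<Rightarrow> ('i \<Rightarrow> 'b \<Rightarrow> 'r::comm_semiring_1) \<Rightarrow> ('i \<Rightarrow> 'b) \<Rightarrow> 'r" where
  "prod_dist I p = (\<lambda>y. if y \<in> extensional I then (\<Prod>i\<in>I. p i (y i)) else 0)"

text \<open>Generating relation:
  1\<bullet>(\<Sum>_k \<alpha>^i_k y^i_k)_i  ~  \<Sum>_{(k_i)} \<alpha>^1_{k_1}\<cdots>\<alpha>^n_{k_n}\<bullet>(y^1_{k_1},...,y^n_{k_n}).\<close>
definition tensor_gen :: "'i set \<Rightarrow> ('i \<Rightarrow> 'b set) \<Rightarrow> ('i \<Rightarrow> ('b \<Rightarrow> 'r::comm_semiring_1) \<Rightarrow> 'b)
     \<Rightarrow> ((('i \<Rightarrow> 'b) \<Rightarrow> 'r) \<times> (('i \<Rightarrow> 'b) \<Rightarrow> 'r)) set" where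
  "tensor_gen I Y alg =
     {(delta (\<lambda>i\<in>I. alg i (p i)), prod_dist I p) | p. \<forall>i\<in>I. p i \<in> fsdist (Y i)}"

definition tensor_rel :: "'i set \<Rightarrow> ('i \<Rightarrow> 'b set) \<Rightarrow> ('i \<Rightarrow> ('b \<Rightarrow> 'r::comm_semiring_1) \<Rightarrow> 'b)
     \<Rightarrow> ((('i \<Rightarrow> 'b) \<Rightarrow> 'r) \<times> (('i \<Rightarrow> 'b) \<Rightarrow> 'r)) set" where
  "tensor_rel I Y alg =
     \<Inter>{E. convex_equiv (fsdist (PiE I Y)) Dmult E \<and> tensor_gen I Y alg \<subseteq> E}"

definition tensor_carrier :: "'i set \<Rightarrow> ('i \<Rightarrow> 'b set) \<Rightarrow> ('i \<Rightarrow> ('b \<Rightarrow> 'r::comm_semiring_1) \<Rightarrow> 'b)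
     \<Rightarrow> (('i \<Rightarrow> 'b) \<Rightarrow> 'r) set set" where
  "tensor_carrier I Y alg = fsdist (PiE I Y) // tensor_rel I Y alg"

definition tensor_alg :: "'i set \<Rightarrow> ('i \<Rightarrow> 'b set) \<Rightarrow> ('i \<Rightarrow> ('b \<Rightarrow> 'r::comm_semiring_1) \<Rightarrow> 'b)
     \<Rightarrow> (((('i \<Rightarrow> 'b) \<Rightarrow> 'r) set \<Rightarrow> 'r) \<Rightarrow> (('i \<Rightarrow> 'b) \<Rightarrow> 'r) set)" where
  "tensor_alg I Y alg = quot_alg (tensor_rel I Y alg) Dmult"

text \<open>U_{(Y_i)}: (y_i)_i \<mapsto> y_1 \<otimes> ... \<otimes> y_n, the class of 1\<bullet>(y_1,...,y_n).\<close>
definition tensor_unit :: "'i set \<Rightarrow> ('i \<Rightarrow> 'b set) \<Rightarrow> ('i \<Rightarrow> ('b \<Rightarrow> 'r::comm_semiring_1) \<Rightarrow> 'b)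
     \<Rightarrow> ('i \<Rightarrow> 'b) \<Rightarrow> (('i \<Rightarrow> 'b) \<Rightarrow> 'r) set" where
  "tensor_unit I Y alg y = tensor_rel I Y alg `` {delta y}"

end

theory Submission
  imports Defs
begin

(* Let g send (y_i)_i to (f_j (y restricted to phi^-1(j)))_j. Pushing forward along g maps the
   generators of the relation defining the tensor product of the Y_i to generators of the one
   defining the tensor product of the X_j: by multiconvexity, f_j evaluated at the barycentres
   of distributions p_i is the barycentre of the pushforward of their product distribution, and
   the product distribution over {1..n} splits into the product, over j, of the product
   distributions on the blocks phi^-1(j). The preimage of a convex equivalence relation under
   D(g) is again one, so it contains the tensor relation and D(g) descends to a convex map F of
   the quotients. F is unique because every class [p] is the convex combination of the
   elementary tensors [delta y] with weights p y. *)

section \<open>Finitely supported distributions\<close>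

lemma sum_supp_superset:
  assumes "finite S" "supp p \<subseteq> S"
  shows "sum p (supp p) = sum p S"
  by (rule sum.mono_neutral_left) (use assms in \<open>auto simp: supp_def\<close>)

lemma fsdist_finite: "p \<in> fsdist A \<Longrightarrow> finite (supp p)"
  and fsdist_sum: "p \<in> fsdist A \<Longrightarrow> sum p (supp p) = 1"
  and fsdist_supp: "p \<in> fsdist A \<Longrightarrow> supp p \<subseteq> A"
  by (simp_all add: fsdist_def)

lemma Dmap_eq_sum:
  assumes "finite S" "supp p \<subseteq> S"
  shows "Dmap f p y = sum p {x\<in>S. f x = y}"
  unfolding Dmap_def by (rule sum.mono_neutral_left) (use assms in \<open>auto simp: supp_def\<close>)

lemma Dmap_eq_sum_if:
  assumes "finite S" "supp p \<subseteq> S"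
  shows "Dmap f p y = (\<Sum>x\<in>S. if f x = y then p x else 0)"
  unfolding Dmap_eq_sum[OF assms] using sum.inter_filter[OF assms(1)] by simp

lemma Dmap_apply_inj:
  assumes "supp p \<subseteq> S" "inj_on f S" "x \<in> S"
  shows "Dmap f p (f x) = p x"
proof -
  have "{x'\<in>supp p. f x' = f x} = (if x \<in> supp p then {x} else {})"
    using assms by (auto dest: inj_onD)
  then show ?thesis unfolding Dmap_def by (auto simp: supp_def)
qed

lemma Dmap_apply_notin_image:
  assumes "supp p \<subseteq> S" "y \<notin> f ` S"
  shows "Dmap f p y = 0"
proof -
  have e: "{x\<in>supp p. f x = y} = {}" using assms by auto
  show ?thesis unfolding Dmap_def e by simp
qed

lemma supp_Dmap: "supp (Dmap f p) \<subseteq> f ` supp p"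
proof
  fix y assume "y \<in> supp (Dmap f p)"
  then show "y \<in> f ` supp p"
    using Dmap_apply_notin_image[of p "supp p" y f] by (auto simp: supp_def)
qed

lemma finite_supp_Dmap: "finite (supp p) \<Longrightarrow> finite (supp (Dmap f p))"
  by (rule finite_subset[OF supp_Dmap]) simp

lemma Dmap_in_fsdist:
  assumes p: "p \<in> fsdist A" and f: "f \<in> A \<rightarrow> B"
  shows "Dmap f p \<in> fsdist B"
proof -
  have fin: "finite (supp p)" and pA: "supp p \<subseteq> A" using p by (simp_all add: fsdist_def)
  have "sum (Dmap f p) (supp (Dmap f p)) = sum (Dmap f p) (f ` supp p)"
    by (rule sum_supp_superset[OF _ supp_Dmap]) (use fin in simp)
  also have "\<dots> = sum p (supp p)"
    unfolding Dmap_def using sum.group[of "supp p" "f ` supp p" f p] fin by simp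
  also have "\<dots> = 1" using p by (rule fsdist_sum)
  finally have "sum (Dmap f p) (supp (Dmap f p)) = 1" .
  moreover have "supp (Dmap f p) \<subseteq> B" using supp_Dmap[of f p] pA f by (auto simp: Pi_def)
  moreover have "finite (supp (Dmap f p))" using fin by (rule finite_supp_Dmap)
  ultimately show ?thesis unfolding fsdist_def by blast
qed

lemma Dmap_cong: "(\<And>x. x \<in> supp p \<Longrightarrow> f x = g x) \<Longrightarrow> Dmap f p = Dmap g p"
  unfolding Dmap_def by (intro ext sum.cong) auto

lemma Dmap_ident: "Dmap (\<lambda>x. x) p = p"
proof
  fix y
  have "{x\<in>supp p. x = y} = (if p y = 0 then {} else {y})" by (auto simp: supp_def)
  then show "Dmap (\<lambda>x. x) p y = p y" unfolding Dmap_def by simp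
qed

lemma Dmap_comp:
  assumes fin: "finite (supp p)"
  shows "Dmap f (Dmap g p) = Dmap (f \<circ> g) p"
proof
  fix z
  have "Dmap f (Dmap g p) z = sum (Dmap g p) {y\<in>g ` supp p. f y = z}"
    by (rule Dmap_eq_sum) (use fin supp_Dmap[of g p] in auto)
  also have "\<dots> = (\<Sum>y\<in>{y\<in>g ` supp p. f y = z}. sum p {x. x \<in> {x\<in>supp p. f (g x) = z} \<and> g x = y})"
    by (intro sum.cong refl) (auto simp: Dmap_def intro!: sum.cong)
  also have "\<dots> = sum p {x\<in>supp p. f (g x) = z}"
    by (rule sum.group) (use fin in auto)
  finally show "Dmap f (Dmap g p) z = Dmap (f \<circ> g) p z" by (simp add: Dmap_def)
qed

lemma supp_delta: "supp (delta x) \<subseteq> {x}"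
  by (auto simp: supp_def delta_def)

lemma Dmap_delta: "Dmap f (delta x) = delta (f x)"
proof
  fix y
  have "Dmap f (delta x) y = (\<Sum>x'\<in>{x}. if f x' = y then delta x x' else 0)"
    by (rule Dmap_eq_sum_if) (use supp_delta[of x] in auto)
  also have "\<dots> = delta (f x) y" by (simp add: delta_def)
  finally show "Dmap f (delta x) y = delta (f x) y" .
qed

lemma delta_in_fsdist: "x \<in> A \<Longrightarrow> delta x \<in> fsdist A"
  unfolding fsdist_def using sum_supp_superset[of "{x}" "delta x"] supp_delta[of x]
  by (auto intro: finite_subset simp: delta_def)

lemma supp_Dmult: "supp (Dmult P) \<subseteq> \<Union> (supp ` supp P)"
proof
  fix x assume x: "x \<in> supp (Dmult P)"
  show "x \<in> \<Union> (supp ` supp P)"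
  proof (rule ccontr)
    assume "x \<notin> \<Union> (supp ` supp P)"
    then have "Dmult P x = 0" unfolding Dmult_def by (intro sum.neutral) (auto simp: supp_def)
    then show False using x by (simp add: supp_def)
  qed
qed

lemma Dmult_eq_sum:
  assumes "finite S" "supp P \<subseteq> S"
  shows "Dmult P x = (\<Sum>q\<in>S. P q * q x)"
  unfolding Dmult_def by (rule sum.mono_neutral_left) (use assms in \<open>auto simp: supp_def\<close>)

lemma Dmult_in_fsdist:
  assumes P: "P \<in> fsdist (fsdist A)"
  shows "Dmult P \<in> fsdist A"
proof -
  let ?U = "\<Union> (supp ` supp P)"
  have finP: "finite (supp P)" using P by (rule fsdist_finite)
  have fq: "\<forall>q\<in>supp P. q \<in> fsdist A" using fsdist_supp[OF P] by blast
  have finU: "finite ?U" and UA: "?U \<subseteq> A" using finP fq by (auto simp: fsdist_def)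
  have "sum (Dmult P) (supp (Dmult P)) = (\<Sum>x\<in>?U. \<Sum>q\<in>supp P. P q * q x)"
    unfolding sum_supp_superset[OF finU supp_Dmult] by (simp add: Dmult_def)
  also have "\<dots> = (\<Sum>q\<in>supp P. P q * sum q ?U)"
    by (subst sum.swap) (simp add: sum_distrib_left)
  also have "\<dots> = (\<Sum>q\<in>supp P. P q)"
  proof (intro sum.cong refl)
    fix q assume q: "q \<in> supp P"
    have "sum q ?U = sum q (supp q)"
      by (rule sum_supp_superset[symmetric]) (use finU q in auto)
    then show "P q * sum q ?U = P q" using fq q fsdist_sum[of q A] by simp
  qed
  also have "\<dots> = 1" using P by (rule fsdist_sum)
  finally have "sum (Dmult P) (supp (Dmult P)) = 1" .
  moreover have "finite (supp (Dmult P))" using finite_subset[OF supp_Dmult finU] .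
  moreover have "supp (Dmult P) \<subseteq> A" using supp_Dmult[of P] UA by (rule order_trans)
  ultimately show ?thesis unfolding fsdist_def by blast
qed

lemma Dmult_Dmap:
  assumes fin: "finite (supp p)"
  shows "Dmult (Dmap k p) x = (\<Sum>y\<in>supp p. p y * k y x)"
proof -
  have "Dmult (Dmap k p) x = (\<Sum>q\<in>k ` supp p. Dmap k p q * q x)"
    by (rule Dmult_eq_sum) (use fin supp_Dmap[of k p] in auto)
  also have "\<dots> = (\<Sum>q\<in>k ` supp p. \<Sum>y\<in>{y. y \<in> supp p \<and> k y = q}. p y * k y x)"
    by (intro sum.cong refl) (auto simp: Dmap_def sum_distrib_right intro!: sum.cong)
  also have "\<dots> = (\<Sum>y\<in>supp p. p y * k y x)"
    by (rule sum.group) (use fin in auto)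
  finally show ?thesis .
qed

lemma Dmult_Dmap_delta:
  assumes fin: "finite (supp p)"
  shows "Dmult (Dmap delta p) = p"
proof
  fix x
  have "Dmult (Dmap delta p) x = (\<Sum>y\<in>supp p. if y = x then p y else 0)"
    unfolding Dmult_Dmap[OF fin] by (intro sum.cong refl) (auto simp: delta_def)
  also have "\<dots> = p x" using fin by (auto simp: supp_def)
  finally show "Dmult (Dmap delta p) x = p x" .
qed

lemma Dmap_Dmult:
  assumes P: "P \<in> fsdist (fsdist A)"
  shows "Dmap g (Dmult P) = Dmult (Dmap (Dmap g) P)"
proof
  fix z
  let ?U = "\<Union> (supp ` supp P)"
  have finP: "finite (supp P)" using P by (rule fsdist_finite)
  have finU: "finite ?U" using finP fsdist_supp[OF P] by (auto simp: fsdist_def)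
  have "Dmap g (Dmult P) z = (\<Sum>x\<in>{x\<in>?U. g x = z}. \<Sum>q\<in>supp P. P q * q x)"
    unfolding Dmap_eq_sum[OF finU supp_Dmult] by (simp add: Dmult_def)
  also have "\<dots> = (\<Sum>q\<in>supp P. P q * sum q {x\<in>?U. g x = z})"
    by (subst sum.swap) (simp add: sum_distrib_left)
  also have "\<dots> = (\<Sum>q\<in>supp P. P q * Dmap g q z)"
    by (intro sum.cong refl arg_cong2[where f = "(*)"] Dmap_eq_sum[symmetric]) (use finU in auto)
  also have "\<dots> = Dmult (Dmap (Dmap g) P) z"
    by (rule Dmult_Dmap[OF finP, symmetric])
  finally show "Dmap g (Dmult P) z = Dmult (Dmap (Dmap g) P) z" .
qed

definition pair_dist :: "('a \<Rightarrow> 'r::comm_semiring_1) \<Rightarrow> ('b \<Rightarrow> 'r) \<Rightarrow> ('a \<times> 'b \<Rightarrow> 'r)" where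
  "pair_dist p q = (\<lambda>(x, y). p x * q y)"

lemma supp_pair_dist: "supp (pair_dist p q) \<subseteq> supp p \<times> supp q"
  by (auto simp: supp_def pair_dist_def)

lemma Dmult_Dmap_Dmap:
  assumes fp: "finite (supp p)" and fq: "finite (supp q)"
  shows "Dmult (Dmap (\<lambda>x. Dmap (H x) q) p) = Dmap (\<lambda>(x, y). H x y) (pair_dist p q)"
proof
  fix w
  have "Dmult (Dmap (\<lambda>x. Dmap (H x) q) p) w
      = (\<Sum>x\<in>supp p. p x * (\<Sum>y\<in>supp q. if H x y = w then q y else 0))"
    unfolding Dmult_Dmap[OF fp]
    by (intro sum.cong refl arg_cong2[where f = "(*)"] Dmap_eq_sum_if) (use fq in auto)
  also have "\<dots> = (\<Sum>(x, y)\<in>supp p \<times> supp q. if H x y = w then pair_dist p q (x, y) else 0)"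
    by (simp add: sum.cartesian_product sum_distrib_left pair_dist_def if_distrib cong: if_cong)
  also have "\<dots> = Dmap (\<lambda>(x, y). H x y) (pair_dist p q) w"
    by (subst Dmap_eq_sum_if[OF _ supp_pair_dist]) (use fp fq in \<open>auto intro!: sum.cong\<close>)
  finally show "Dmult (Dmap (\<lambda>x. Dmap (H x) q) p) w = Dmap (\<lambda>(x, y). H x y) (pair_dist p q) w" .
qed

section \<open>Product distributions\<close>

lemma supp_prod_dist_extensional: "supp (prod_dist I p) \<subseteq> extensional I"
  by (auto simp: supp_def prod_dist_def)

lemma supp_prod_dist:
  assumes "finite I"
  shows "supp (prod_dist I p) \<subseteq> PiE I (\<lambda>i. supp (p i))"
proof
  fix y assume y: "y \<in> supp (prod_dist I p)"
  then have ext: "y \<in> extensional I" and pr: "(\<Prod>i\<in>I. p i (y i)) \<noteq> 0"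
    by (auto simp: supp_def prod_dist_def split: if_splits)
  have "p i (y i) \<noteq> 0" if "i \<in> I" for i
  proof
    assume "p i (y i) = 0"
    then have "(\<Prod>i\<in>I. p i (y i)) = 0" using assms that by (intro prod_zero) auto
    then show False using pr by simp
  qed
  then show "y \<in> PiE I (\<lambda>i. supp (p i))" using ext by (auto simp: PiE_def supp_def)
qed

lemma finite_supp_prod_dist:
  assumes "finite I" "\<forall>i\<in>I. finite (supp (p i))"
  shows "finite (supp (prod_dist I p))"
  by (rule finite_subset[OF supp_prod_dist[OF assms(1)]]) (use assms in \<open>simp add: finite_PiE\<close>)

lemma prod_dist_in_fsdist:
  assumes fI: "finite I" and p: "\<forall>i\<in>I. p i \<in> fsdist (Y i)"
  shows "prod_dist I p \<in> fsdist (PiE I Y)"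
proof -
  let ?S = "PiE I (\<lambda>i. supp (p i))"
  have finS: "finite ?S" using fI p by (intro finite_PiE) (auto simp: fsdist_def)
  have "sum (prod_dist I p) (supp (prod_dist I p)) = (\<Sum>y\<in>?S. \<Prod>i\<in>I. p i (y i))"
    unfolding sum_supp_superset[OF finS supp_prod_dist[OF fI]]
    by (intro sum.cong refl) (auto simp: prod_dist_def PiE_def)
  also have "\<dots> = (\<Prod>i\<in>I. \<Sum>x\<in>supp (p i). p i x)"
    by (rule prod_sum_PiE[symmetric]) (use fI p in \<open>auto simp: fsdist_def\<close>)
  also have "\<dots> = 1" using p by (simp add: fsdist_def)
  finally have "sum (prod_dist I p) (supp (prod_dist I p)) = 1" .
  moreover have "finite (supp (prod_dist I p))"
    by (rule finite_subset[OF supp_prod_dist[OF fI] finS])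
  moreover have "supp (prod_dist I p) \<subseteq> PiE I Y"
    using supp_prod_dist[OF fI, of p] p by (auto simp: PiE_def Pi_def fsdist_def)
  ultimately show ?thesis unfolding fsdist_def by blast
qed

lemma prod_dist_empty: "prod_dist {} p = delta (\<lambda>i. undefined)"
  by (rule ext) (auto simp: prod_dist_def delta_def extensional_def fun_eq_iff)

lemma prod_dist_insert:
  assumes fT: "finite T" and aT: "a \<notin> T"
  shows "prod_dist (insert a T) p = Dmap (\<lambda>(z, t). z(a := t)) (pair_dist (prod_dist T p) (p a))"
proof
  fix w
  let ?S = "extensional T \<times> UNIV"
  let ?upd = "\<lambda>(z, t). z(a := t)"
  have suppS: "supp (pair_dist (prod_dist T p) (p a)) \<subseteq> ?S"
    using supp_pair_dist[of "prod_dist T p" "p a"] supp_prod_dist_extensional[of T p] by auto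
  have inj: "inj_on ?upd ?S"
  proof (rule inj_onI, clarsimp)
    fix z t z' t'
    assume z: "z \<in> extensional T" and z': "z' \<in> extensional T" and eq: "z(a := t) = z'(a := t')"
    have "z i = z' i" for i
      using fun_cong[OF eq, of i] z z' aT by (cases "i = a") (auto simp: extensional_def)
    then show "z = z' \<and> t = t'" using fun_cong[OF eq, of a] by auto
  qed
  show "prod_dist (insert a T) p w = Dmap ?upd (pair_dist (prod_dist T p) (p a)) w"
  proof (cases "w \<in> extensional (insert a T)")
    case True
    have w': "w(a := undefined) \<in> extensional T" using True by (auto simp: extensional_def)
    have "Dmap ?upd (pair_dist (prod_dist T p) (p a)) (?upd (w(a := undefined), w a))
        = pair_dist (prod_dist T p) (p a) (w(a := undefined), w a)"
      by (rule Dmap_apply_inj[OF suppS inj]) (use w' in simp)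
    also have "\<dots> = (\<Prod>i\<in>T. p i (w i)) * p a (w a)"
      using w' aT by (simp add: pair_dist_def prod_dist_def del: fun_upd_apply)
        (intro arg_cong2[where f = "(*)"] prod.cong refl, auto)
    also have "\<dots> = prod_dist (insert a T) p w"
      using True fT aT by (simp add: prod_dist_def mult.commute)
    finally show ?thesis by simp
  next
    case False
    then have "w \<notin> ?upd ` ?S" by (auto simp: extensional_def)
    then show ?thesis using False Dmap_apply_notin_image[OF suppS] by (simp add: prod_dist_def)
  qed
qed

lemma Dmap_prod_dist_insert:
  assumes T: "finite T" "a \<notin> T"
    and fin: "finite (supp (prod_dist T p))" "finite (supp (p a))"
  shows "Dmap k (prod_dist (insert a T) p)
         = Dmult (Dmap (\<lambda>z. Dmap (\<lambda>t. k (z(a := t))) (p a)) (prod_dist T p))"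
proof -
  have "finite (supp (pair_dist (prod_dist T p) (p a)))"
    using fin by (intro finite_subset[OF supp_pair_dist]) simp
  then show ?thesis
    unfolding prod_dist_insert[OF T] Dmult_Dmap_Dmap[OF fin]
    by (simp add: Dmap_comp comp_def case_prod_unfold)
qed

lemma prod_if_zero:
  fixes f :: "'i \<Rightarrow> 'r::comm_semiring_1"
  assumes "finite J"
  shows "(\<Prod>j\<in>J. if P j then f j else 0) = (if \<forall>j\<in>J. P j then \<Prod>j\<in>J. f j else 0)"
proof (cases "\<forall>j\<in>J. P j")
  case False
  then have "\<exists>j\<in>J. (if P j then f j else 0) = 0" by auto
  then show ?thesis using False prod_zero[OF assms] by simp
qed simp

lemma Dmap_prod_dist_componentwise:
  assumes fJ: "finite J" and fr: "\<forall>j\<in>J. finite (supp (r j))"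
  shows "Dmap (\<lambda>z. \<lambda>j\<in>J. h j (z j)) (prod_dist J r) = prod_dist J (\<lambda>j. Dmap (h j) (r j))"
proof
  fix w
  let ?S = "PiE J (\<lambda>j. supp (r j))"
  have finS: "finite ?S" using fJ fr by (intro finite_PiE) auto
  show "Dmap (\<lambda>z. \<lambda>j\<in>J. h j (z j)) (prod_dist J r) w = prod_dist J (\<lambda>j. Dmap (h j) (r j)) w"
  proof (cases "w \<in> extensional J")
    case True
    have "Dmap (\<lambda>z. \<lambda>j\<in>J. h j (z j)) (prod_dist J r) w
        = (\<Sum>z\<in>?S. \<Prod>j\<in>J. if h j (z j) = w j then r j (z j) else 0)"
      unfolding Dmap_eq_sum_if[OF finS supp_prod_dist[OF fJ]] prod_if_zero[OF fJ]
      using True by (intro sum.cong refl) (auto simp: prod_dist_def PiE_def extensional_def fun_eq_iff)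
    also have "\<dots> = (\<Prod>j\<in>J. \<Sum>x\<in>supp (r j). if h j x = w j then r j x else 0)"
      by (rule prod_sum_PiE[symmetric]) (use fJ fr in auto)
    also have "\<dots> = prod_dist J (\<lambda>j. Dmap (h j) (r j)) w"
      unfolding prod_dist_def using True fr
      by (simp, intro prod.cong refl Dmap_eq_sum_if[symmetric]) auto
    finally show ?thesis .
  next
    case False
    then have "w \<notin> (\<lambda>z. \<lambda>j\<in>J. h j (z j)) ` UNIV" by auto
    then show ?thesis
      using False Dmap_apply_notin_image[of _ UNIV] by (simp add: prod_dist_def)
  qed
qed

definition block_map :: "('i \<Rightarrow> 'j) \<Rightarrow> 'i set \<Rightarrow> 'j set \<Rightarrow> ('j \<Rightarrow> ('i \<Rightarrow> 'b) \<Rightarrow> 'a)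
     \<Rightarrow> ('i \<Rightarrow> 'b) \<Rightarrow> 'j \<Rightarrow> 'a" where
  "block_map \<phi> I J f y = (\<lambda>j\<in>J. f j (restrict y {i\<in>I. \<phi> i = j}))"

lemma block_map_comp:
  "block_map \<phi> I J f = (\<lambda>z. \<lambda>j\<in>J. f j (z j)) \<circ> block_map \<phi> I J (\<lambda>_ z. z)"
  by (auto simp: block_map_def fun_eq_iff)

lemma Dmap_blocks_prod_dist:
  assumes fI: "finite I" and fJ: "finite J" and \<phi>: "\<phi> \<in> I \<rightarrow> J"
  shows "Dmap (block_map \<phi> I J (\<lambda>_ z. z)) (prod_dist I p)
         = prod_dist J (\<lambda>j. prod_dist {i\<in>I. \<phi> i = j} p)"
proof
  fix w
  let ?S = "\<lambda>j. {i\<in>I. \<phi> i = j}"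
  let ?blocks = "block_map \<phi> I J (\<lambda>_ z. z)"
  have inj: "inj_on ?blocks (extensional I)"
  proof (rule inj_onI)
    fix y y' assume y: "y \<in> extensional I" and y': "y' \<in> extensional I"
      and eq: "?blocks y = ?blocks y'"
    have "y i = y' i" if i: "i \<in> I" for i
    proof -
      have "restrict y {k\<in>I. \<phi> k = \<phi> i} = restrict y' {k\<in>I. \<phi> k = \<phi> i}"
        using fun_cong[OF eq, of "\<phi> i"] funcset_mem[OF \<phi> i] by (simp add: block_map_def)
      then have "restrict y {k\<in>I. \<phi> k = \<phi> i} i = restrict y' {k\<in>I. \<phi> k = \<phi> i} i"
        by (rule fun_cong)
      then show ?thesis using i by simp
    qed
    then show "y = y'" using y y' by (rule extensionalityI[rotated 2])
  qed
  show "Dmap ?blocks (prod_dist I p) w = prod_dist J (\<lambda>j. prod_dist (?S j) p) w"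
  proof (cases "w \<in> ?blocks ` extensional I")
    case True
    then obtain y where y: "y \<in> extensional I" and w: "w = ?blocks y" by blast
    have "Dmap ?blocks (prod_dist I p) w = (\<Prod>i\<in>I. p i (y i))"
      unfolding w Dmap_apply_inj[OF supp_prod_dist_extensional inj y] using y
      by (simp add: prod_dist_def)
    also have "\<dots> = (\<Prod>j\<in>J. \<Prod>i\<in>?S j. p i (y i))"
      by (rule prod.group[symmetric]) (use fI fJ \<phi> in auto)
    also have "\<dots> = prod_dist J (\<lambda>j. prod_dist (?S j) p) w"
      unfolding w prod_dist_def block_map_def by (auto simp: extensional_def intro!: prod.cong)
    finally show ?thesis .
  next
    case False
    have "prod_dist J (\<lambda>j. prod_dist (?S j) p) w = 0"
    proof (cases "w \<in> extensional J \<and> (\<forall>j\<in>J. w j \<in> extensional (?S j))")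
      case True
      then have "w = ?blocks (\<lambda>i\<in>I. w (\<phi> i) i)"
        by (auto simp: block_map_def extensional_def fun_eq_iff)
      then show ?thesis using False by auto
    next
      case False
      then show ?thesis using fJ by (auto simp: prod_dist_def intro!: prod_zero)
    qed
    then show ?thesis
      using Dmap_apply_notin_image[OF supp_prod_dist_extensional False] by simp
  qed
qed

lemma Dmap_block_map_prod_dist:
  assumes fI: "finite I" and fJ: "finite J" and \<phi>: "\<phi> \<in> I \<rightarrow> J"
    and fp: "\<forall>i\<in>I. finite (supp (p i))"
  shows "Dmap (block_map \<phi> I J f) (prod_dist I p)
         = prod_dist J (\<lambda>j. Dmap (f j) (prod_dist {i\<in>I. \<phi> i = j} p))"
proof -
  have "finite (supp (prod_dist I p))" using finite_supp_prod_dist[OF fI fp] .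
  then have "Dmap (block_map \<phi> I J f) (prod_dist I p)
      = Dmap (\<lambda>z. \<lambda>j\<in>J. f j (z j)) (prod_dist J (\<lambda>j. prod_dist {i\<in>I. \<phi> i = j} p))"
    by (simp add: block_map_comp[of \<phi> I J f] Dmap_comp[symmetric] Dmap_blocks_prod_dist[OF fI fJ \<phi>])
  also have "\<dots> = prod_dist J (\<lambda>j. Dmap (f j) (prod_dist {i\<in>I. \<phi> i = j} p))"
    by (rule Dmap_prod_dist_componentwise[OF fJ]) (use fI fp in \<open>auto intro: finite_supp_prod_dist\<close>)
  finally show ?thesis .
qed

section \<open>Multiconvex maps\<close>

lemma PiE_fun_upd_mem: "f \<in> PiE S T \<Longrightarrow> x \<in> S \<Longrightarrow> y \<in> T x \<Longrightarrow> f(x := y) \<in> PiE S T"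
  using PiE_fun_upd[of y T x f S] by (simp add: insert_absorb)

lemma multiconvex_coordinate:
  assumes h: "multiconvex S Y alg Z b h" and y: "y \<in> PiE S Y" and a: "a \<in> S"
    and q: "q \<in> fsdist (Y a)"
  shows "h (y(a := alg a q)) = b (Dmap (\<lambda>t. h (y(a := t))) q)"
    and "Dmap (\<lambda>t. h (y(a := t))) q \<in> fsdist Z"
proof -
  have "convex_map (Y a) (alg a) Z b (\<lambda>t. h (y(a := t)))"
    using h y a by (simp add: multiconvex_def)
  then show "h (y(a := alg a q)) = b (Dmap (\<lambda>t. h (y(a := t))) q)"
    and "Dmap (\<lambda>t. h (y(a := t))) q \<in> fsdist Z"
    using q by (auto simp: convex_map_def intro!: Dmap_in_fsdist[OF q])
qed

lemma multiconvex_override_expand: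
  assumes fS: "finite S"
    and Yc: "\<forall>i\<in>S. convex_set (Y i) (alg i)"
    and h: "multiconvex S Y alg Z b h"
    and Zc: "convex_set Z b"
    and p: "\<forall>i\<in>S. p i \<in> fsdist (Y i)"
    and TS: "T \<subseteq> S" and y: "y \<in> PiE S Y"
  shows "h (override_on y (\<lambda>i. alg i (p i)) T)
         = b (Dmap (\<lambda>z. h (override_on y z T)) (prod_dist T p))"
proof -
  have "finite T" using finite_subset[OF TS fS] .
  then show ?thesis using TS y
  proof (induction T arbitrary: y rule: finite_induct)
    case empty
    then show ?case
      using Zc h by (simp add: prod_dist_empty Dmap_delta convex_set_def multiconvex_def)
  next
    case (insert a T)
    txt \<open>Expand the other coordinates by induction, then coordinate \<open>a\<close> inside by convexity
      in it, and merge the two layers of distributions with the algebra law of \<open>Z\<close>.\<close>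
    have aS: "a \<in> S" and TS: "T \<subseteq> S" using insert.prems by auto
    let ?PT = "prod_dist T p" and ?w = "\<lambda>z. override_on y z T"
    have PT: "?PT \<in> fsdist (PiE T Y)" using prod_dist_in_fsdist[OF insert.hyps(1)] p TS by auto
    have pa: "p a \<in> fsdist (Y a)" using p aS by auto
    have finPT: "finite (supp ?PT)" and finpa: "finite (supp (p a))"
      using PT pa by (simp_all add: fsdist_def)
    have w: "?w z \<in> PiE S Y" if "z \<in> PiE T Y" for z
      using that insert.prems TS by (auto simp: PiE_def Pi_def extensional_def override_on_def)
    define K where "K z = Dmap (\<lambda>t. h ((?w z)(a := t))) (p a)" for z
    note K = multiconvex_coordinate[OF h w aS pa, folded K_def]
    have y': "y(a := alg a (p a)) \<in> PiE S Y"
      using insert.prems Yc aS pa by (auto intro: PiE_fun_upd_mem simp: convex_set_def)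
    have "h (override_on y (\<lambda>i. alg i (p i)) (insert a T))
        = b (Dmap (\<lambda>z. h (override_on (y(a := alg a (p a))) z T)) ?PT)"
      unfolding override_on_insert' using insert.IH[OF TS y'] .
    also have "Dmap (\<lambda>z. h (override_on (y(a := alg a (p a))) z T)) ?PT = Dmap (b \<circ> K) ?PT"
    proof (rule Dmap_cong)
      fix z assume "z \<in> supp ?PT"
      then have z: "z \<in> PiE T Y" using fsdist_supp[OF PT] by blast
      have "override_on (y(a := alg a (p a))) z T = (?w z)(a := alg a (p a))"
        using insert.hyps(2) by (auto simp: override_on_def)
      then show "h (override_on (y(a := alg a (p a))) z T) = (b \<circ> K) z"
        using K(1)[OF z] by simp
    qed
    also have "b (Dmap (b \<circ> K) ?PT) = b (Dmult (Dmap K ?PT))"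
    proof -
      have "Dmap K ?PT \<in> fsdist (fsdist Z)" by (rule Dmap_in_fsdist[OF PT]) (use K(2) in blast)
      then show ?thesis using Zc by (simp add: Dmap_comp[OF finPT, symmetric] convex_set_def)
    qed
    also have "Dmult (Dmap K ?PT) = Dmap (\<lambda>z. h (override_on y z (insert a T))) (prod_dist (insert a T) p)"
    proof -
      have "override_on y (z(a := t)) (insert a T) = (?w z)(a := t)" for z t
        using insert.hyps(2) by (auto simp: override_on_def)
      then show ?thesis
        unfolding K_def by (simp add: Dmap_prod_dist_insert[OF insert.hyps finPT finpa])
    qed
    finally show ?case .
  qed
qed

lemma multiconvex_expand:
  assumes "finite S"
    and "\<forall>i\<in>S. convex_set (Y i) (alg i)"
    and "multiconvex S Y alg Z b h"
    and "convex_set Z b"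
    and p: "\<forall>i\<in>S. p i \<in> fsdist (Y i)"
  shows "h (\<lambda>i\<in>S. alg i (p i)) = b (Dmap h (prod_dist S p))"
proof -
  let ?y = "\<lambda>i\<in>S. alg i (p i)"
  have y: "?y \<in> PiE S Y" using assms(2) p by (auto simp: convex_set_def)
  have "override_on ?y (\<lambda>i. alg i (p i)) S = ?y" by (auto simp: override_on_def)
  moreover have "Dmap (\<lambda>z. h (override_on ?y z S)) (prod_dist S p) = Dmap h (prod_dist S p)"
  proof (rule Dmap_cong)
    fix z assume "z \<in> supp (prod_dist S p)"
    then have "z \<in> extensional S" using supp_prod_dist_extensional by blast
    then show "h (override_on ?y z S) = h z"
      by (auto simp: override_on_def extensional_def intro!: arg_cong[where f = h])
  qed
  ultimately show ?thesis using multiconvex_override_expand[OF assms order_refl y] by simp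
qed

section \<open>Quotients by convex equivalence relations\<close>

lemma convex_equiv_total: "convex_equiv (fsdist A) Dmult (fsdist A \<times> fsdist A)"
proof -
  have "(Dmult (Dmap fst P), Dmult (Dmap snd P)) \<in> fsdist A \<times> fsdist A"
    if P: "P \<in> fsdist (fsdist A \<times> fsdist A)" for P
  proof -
    have "Dmap fst P \<in> fsdist (fsdist A)" "Dmap snd P \<in> fsdist (fsdist A)"
      by (auto intro!: Dmap_in_fsdist[OF P])
    then show ?thesis by (auto intro: Dmult_in_fsdist)
  qed
  then show ?thesis by (auto simp: convex_equiv_def equiv_def refl_on_def sym_def trans_def)
qed

lemma convex_equiv_Inter:
  assumes ne: "\<E> \<noteq> {}" and conv: "\<And>E. E \<in> \<E> \<Longrightarrow> convex_equiv A a E"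
  shows "convex_equiv A a (\<Inter>\<E>)"
proof -
  have eqs: "\<And>E. E \<in> \<E> \<Longrightarrow> equiv A E" using conv by (simp add: convex_equiv_def)
  obtain E0 where E0: "E0 \<in> \<E>" using ne by blast
  have "equiv A (\<Inter>\<E>)"
  proof (rule equivI)
    show "\<Inter>\<E> \<subseteq> A \<times> A" using equiv_type[OF eqs[OF E0]] E0 by blast
    show "refl_on A (\<Inter>\<E>)" using eqs by (auto simp: equiv_def refl_on_def)
    show "sym (\<Inter>\<E>)" using eqs by (auto simp: equiv_def sym_def)
    show "trans (\<Inter>\<E>)" using eqs by (auto simp: equiv_def trans_def)
  qed
  moreover have "(a (Dmap fst P), a (Dmap snd P)) \<in> \<Inter>\<E>" if P: "P \<in> fsdist (\<Inter>\<E>)" for P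
  proof -
    have "P \<in> fsdist E" if "E \<in> \<E>" for E using P that by (auto simp: fsdist_def)
    then show ?thesis using conv by (auto simp: convex_equiv_def)
  qed
  ultimately show ?thesis unfolding convex_equiv_def by blast
qed

lemma convex_equiv_Dmap_preimage:
  assumes E: "convex_equiv (fsdist B) Dmult E" and g: "g \<in> A \<rightarrow> B"
  shows "convex_equiv (fsdist A) Dmult
           {(p, q). p \<in> fsdist A \<and> q \<in> fsdist A \<and> (Dmap g p, Dmap g q) \<in> E}"
    (is "convex_equiv _ _ ?K")
proof -
  have eqE: "equiv (fsdist B) E" using E by (simp add: convex_equiv_def)
  have gA: "Dmap g p \<in> fsdist B" if "p \<in> fsdist A" for p using Dmap_in_fsdist[OF that g] .
  have "equiv (fsdist A) ?K"
  proof (rule equivI)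
    show "refl_on (fsdist A) ?K"
      using gA eqE by (auto simp: refl_on_def equiv_def)
    show "sym ?K" using eqE by (auto simp: sym_def equiv_def)
    show "trans ?K" using eqE unfolding trans_def equiv_def by blast
  qed auto
  moreover have "(Dmult (Dmap fst P), Dmult (Dmap snd P)) \<in> ?K" if P: "P \<in> fsdist ?K" for P
  proof -
    have finP: "finite (supp P)" using P by (rule fsdist_finite)
    have P1: "Dmap fst P \<in> fsdist (fsdist A)" and P2: "Dmap snd P \<in> fsdist (fsdist A)"
      by (auto intro!: Dmap_in_fsdist[OF P])
    let ?Q = "Dmap (map_prod (Dmap g) (Dmap g)) P"
    have "?Q \<in> fsdist E" by (rule Dmap_in_fsdist[OF P]) auto
    then have "(Dmult (Dmap fst ?Q), Dmult (Dmap snd ?Q)) \<in> E"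
      using E by (simp add: convex_equiv_def)
    moreover have "Dmap fst ?Q = Dmap (Dmap g) (Dmap fst P)" "Dmap snd ?Q = Dmap (Dmap g) (Dmap snd P)"
      by (simp_all add: Dmap_comp[OF finP] comp_def)
    ultimately have "(Dmap g (Dmult (Dmap fst P)), Dmap g (Dmult (Dmap snd P))) \<in> E"
      by (simp add: Dmap_Dmult[OF P1] Dmap_Dmult[OF P2])
    then show ?thesis using Dmult_in_fsdist[OF P1] Dmult_in_fsdist[OF P2] by simp
  qed
  ultimately show ?thesis unfolding convex_equiv_def by blast
qed

lemma rep_class_related:
  assumes "equiv A E" "x \<in> A"
  shows "(x, SOME z. z \<in> E``{x}) \<in> E"
proof -
  have "x \<in> E``{x}" using equiv_class_self[OF assms] .
  then have "(SOME z. z \<in> E``{x}) \<in> E``{x}" by (rule someI)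
  then show ?thesis by simp
qed

text \<open>Convexity of the quotient map, whichever representatives \<^const>\<open>quot_alg\<close> picks.\<close>

lemma quot_alg_Dmap_class:
  assumes ce: "convex_equiv (fsdist A) Dmult E" and P: "P \<in> fsdist (fsdist A)"
  shows "quot_alg E Dmult (Dmap (\<lambda>p. E``{p}) P) = E``{Dmult P}"
proof -
  let ?rep = "\<lambda>c. SOME z. z \<in> c"
  have eq: "equiv (fsdist A) E" using ce by (simp add: convex_equiv_def)
  have finP: "finite (supp P)" using P by (rule fsdist_finite)
  let ?Q = "Dmap (\<lambda>p. (p, ?rep (E``{p}))) P"
  have "?Q \<in> fsdist E" by (rule Dmap_in_fsdist[OF P]) (use rep_class_related[OF eq] in auto)
  then have "(Dmult (Dmap fst ?Q), Dmult (Dmap snd ?Q)) \<in> E"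
    using ce by (simp add: convex_equiv_def)
  moreover have "Dmap fst ?Q = P" and "Dmap snd ?Q = Dmap ?rep (Dmap (\<lambda>p. E``{p}) P)"
    by (simp_all add: Dmap_comp[OF finP] comp_def Dmap_ident)
  ultimately have "(Dmult P, Dmult (Dmap ?rep (Dmap (\<lambda>p. E``{p}) P))) \<in> E" by simp
  then show ?thesis unfolding quot_alg_def using eq by (metis equiv_class_eq)
qed

lemma quotient_class_as_combination:
  assumes ce: "convex_equiv (fsdist A) Dmult E" and p: "p \<in> fsdist A"
  shows "E``{p} = quot_alg E Dmult (Dmap (\<lambda>x. E``{delta x}) p)"
proof -
  have finp: "finite (supp p)" using p by (rule fsdist_finite)
  have "Dmap delta p \<in> fsdist (fsdist A)"
    by (rule Dmap_in_fsdist[OF p]) (auto intro: delta_in_fsdist)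
  from quot_alg_Dmap_class[OF ce this] show ?thesis
    by (simp add: Dmap_comp[OF finp] comp_def Dmult_Dmap_delta[OF finp])
qed

lemma convex_map_quotient_lift:
  fixes E :: "(('a \<Rightarrow> 'r::comm_semiring_1) \<times> ('a \<Rightarrow> 'r)) set"
    and E' :: "(('b \<Rightarrow> 'r) \<times> ('b \<Rightarrow> 'r)) set"
  assumes ceA: "convex_equiv (fsdist A) Dmult E" and ceB: "convex_equiv (fsdist B) Dmult E'"
    and g: "g \<in> A \<rightarrow> B"
    and resp: "\<And>p q. (p, q) \<in> E \<Longrightarrow> (Dmap g p, Dmap g q) \<in> E'"
  obtains F where "convex_map (fsdist A // E) (quot_alg E Dmult) (fsdist B // E') (quot_alg E' Dmult) F"
    and "\<And>p. p \<in> fsdist A \<Longrightarrow> F (E``{p}) = E'``{Dmap g p}"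
proof
  let ?rep = "\<lambda>c. SOME p. p \<in> c"
  let ?F = "\<lambda>c. E'``{Dmap g (?rep c)}"
  have eqA: "equiv (fsdist A) E" and eqB: "equiv (fsdist B) E'"
    using ceA ceB by (simp_all add: convex_equiv_def)
  have rep: "?rep c \<in> fsdist A" if c: "c \<in> fsdist A // E" for c
  proof -
    obtain p where "c = E``{p}" "p \<in> fsdist A" using c by (rule quotientE)
    then show ?thesis using rep_class_related[OF eqA] equiv_type[OF eqA] by blast
  qed
  show F_class: "?F (E``{p}) = E'``{Dmap g p}" if p: "p \<in> fsdist A" for p
    using resp[OF rep_class_related[OF eqA p]] eqB by (metis equiv_class_eq)
  show "convex_map (fsdist A // E) (quot_alg E Dmult) (fsdist B // E') (quot_alg E' Dmult) ?F"
    unfolding convex_map_def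
  proof (intro conjI ballI)
    fix c assume "c \<in> fsdist A // E"
    then show "?F c \<in> fsdist B // E'" using rep Dmap_in_fsdist[OF _ g] by (auto intro: quotientI)
  next
    fix Q :: "('a \<Rightarrow> 'r) set \<Rightarrow> 'r" assume Q: "Q \<in> fsdist (fsdist A // E)"
    have finQ: "finite (supp Q)" using Q by (rule fsdist_finite)
    have R: "Dmap ?rep Q \<in> fsdist (fsdist A)" by (rule Dmap_in_fsdist[OF Q]) (use rep in auto)
    have gR: "Dmap (Dmap g) (Dmap ?rep Q) \<in> fsdist (fsdist B)"
      by (rule Dmap_in_fsdist[OF R]) (use Dmap_in_fsdist[OF _ g] in auto)
    have "?F (quot_alg E Dmult Q) = E'``{Dmap g (Dmult (Dmap ?rep Q))}"
      unfolding quot_alg_def by (rule F_class[OF Dmult_in_fsdist[OF R]])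
    also have "\<dots> = E'``{Dmult (Dmap (Dmap g) (Dmap ?rep Q))}" by (simp add: Dmap_Dmult[OF R])
    also have "\<dots> = quot_alg E' Dmult (Dmap (\<lambda>p. E'``{p}) (Dmap (Dmap g) (Dmap ?rep Q)))"
      by (rule quot_alg_Dmap_class[OF ceB gR, symmetric])
    also have "Dmap (\<lambda>p. E'``{p}) (Dmap (Dmap g) (Dmap ?rep Q)) = Dmap ?F Q"
      by (simp add: Dmap_comp finQ finite_supp_Dmap comp_def)
    finally show "?F (quot_alg E Dmult Q) = quot_alg E' Dmult (Dmap ?F Q)" .
  qed
qed

lemma convex_map_quotient_eqI:
  assumes ce: "convex_equiv (fsdist A) Dmult E"
    and G: "convex_map (fsdist A // E) (quot_alg E Dmult) Z b G"
    and H: "convex_map (fsdist A // E) (quot_alg E Dmult) Z b H"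
    and GH: "\<And>x. x \<in> A \<Longrightarrow> G (E``{delta x}) = H (E``{delta x})"
    and t: "t \<in> fsdist A // E"
  shows "G t = H t"
proof -
  let ?U = "\<lambda>x. E``{delta x}"
  obtain p where t: "t = E``{p}" and p: "p \<in> fsdist A" using t by (rule quotientE)
  have finp: "finite (supp p)" using p by (rule fsdist_finite)
  have UQ: "Dmap ?U p \<in> fsdist (fsdist A // E)"
    by (rule Dmap_in_fsdist[OF p]) (auto intro: quotientI delta_in_fsdist)
  have t': "t = quot_alg E Dmult (Dmap ?U p)"
    unfolding t by (rule quotient_class_as_combination[OF ce p])
  have "G t = b (Dmap (G \<circ> ?U) p)"
    using G UQ unfolding t' convex_map_def by (simp add: Dmap_comp[OF finp])
  also have "Dmap (G \<circ> ?U) p = Dmap (H \<circ> ?U) p"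
    using GH fsdist_supp[OF p] by (intro Dmap_cong) auto
  also have "b \<dots> = H t"
    using H UQ unfolding t' convex_map_def by (simp add: Dmap_comp[OF finp])
  finally show ?thesis .
qed

section \<open>Functoriality of the tensor product\<close>

lemma tensor_gen_subset:
  assumes fI: "finite I" and Yc: "\<forall>i\<in>I. convex_set (Y i) (alg i)"
  shows "tensor_gen I Y alg \<subseteq> fsdist (PiE I Y) \<times> fsdist (PiE I Y)"
proof
  fix x assume "x \<in> tensor_gen I Y alg"
  then obtain p where x: "x = (delta (\<lambda>i\<in>I. alg i (p i)), prod_dist I p)"
    and p: "\<forall>i\<in>I. p i \<in> fsdist (Y i)"
    unfolding tensor_gen_def by blast
  have "delta (\<lambda>i\<in>I. alg i (p i)) \<in> fsdist (PiE I Y)"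
    by (rule delta_in_fsdist) (use Yc p in \<open>auto simp: convex_set_def\<close>)
  then show "x \<in> fsdist (PiE I Y) \<times> fsdist (PiE I Y)"
    using x prod_dist_in_fsdist[OF fI p] by simp
qed

lemma convex_equiv_tensor_rel:
  assumes "finite I" "\<forall>i\<in>I. convex_set (Y i) (alg i)"
  shows "convex_equiv (fsdist (PiE I Y)) Dmult (tensor_rel I Y alg)"
  unfolding tensor_rel_def
  by (rule convex_equiv_Inter) (use convex_equiv_total tensor_gen_subset[OF assms] in auto)

lemma tensor_gen_subset_tensor_rel: "tensor_gen I Y alg \<subseteq> tensor_rel I Y alg"
  unfolding tensor_rel_def by blast

lemma tensor_rel_least:
  "convex_equiv (fsdist (PiE I Y)) Dmult E \<Longrightarrow> tensor_gen I Y alg \<subseteq> E \<Longrightarrow> tensor_rel I Y alg \<subseteq> E"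
  unfolding tensor_rel_def by blast

lemma tensor_map_exists_unique:
  assumes fI: "finite I" and fJ: "finite J"
    and Yc: "\<forall>i\<in>I. convex_set (Y i) (algY i)" and Xc: "\<forall>j\<in>J. convex_set (X j) (algX j)"
    and g: "g \<in> PiE I Y \<rightarrow> PiE J X"
    and gen: "\<And>p q. (p, q) \<in> tensor_gen I Y algY \<Longrightarrow> (Dmap g p, Dmap g q) \<in> tensor_rel J X algX"
  shows "\<exists>F. convex_map (tensor_carrier I Y algY) (tensor_alg I Y algY)
                        (tensor_carrier J X algX) (tensor_alg J X algX) F
           \<and> (\<forall>y\<in>PiE I Y. F (tensor_unit I Y algY y) = tensor_unit J X algX (g y))
           \<and> (\<forall>G. convex_map (tensor_carrier I Y algY) (tensor_alg I Y algY)
                        (tensor_carrier J X algX) (tensor_alg J X algX) G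
                  \<and> (\<forall>y\<in>PiE I Y. G (tensor_unit I Y algY y) = tensor_unit J X algX (g y))
                  \<longrightarrow> (\<forall>t\<in>tensor_carrier I Y algY. G t = F t))"
proof -
  let ?EY = "tensor_rel I Y algY" and ?EX = "tensor_rel J X algX"
  have ceY: "convex_equiv (fsdist (PiE I Y)) Dmult ?EY" by (rule convex_equiv_tensor_rel[OF fI Yc])
  have ceX: "convex_equiv (fsdist (PiE J X)) Dmult ?EX" by (rule convex_equiv_tensor_rel[OF fJ Xc])
  let ?K = "{(p, q). p \<in> fsdist (PiE I Y) \<and> q \<in> fsdist (PiE I Y) \<and> (Dmap g p, Dmap g q) \<in> ?EX}"
  have "?EY \<subseteq> ?K"
    using convex_equiv_Dmap_preimage[OF ceX g] tensor_gen_subset[OF fI Yc] gen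
    by (intro tensor_rel_least) auto
  then obtain F
    where F: "convex_map (tensor_carrier I Y algY) (tensor_alg I Y algY)
                         (tensor_carrier J X algX) (tensor_alg J X algX) F"
      and F_class: "\<And>p. p \<in> fsdist (PiE I Y) \<Longrightarrow> F (?EY``{p}) = ?EX``{Dmap g p}"
    using convex_map_quotient_lift[OF ceY ceX g] unfolding tensor_carrier_def tensor_alg_def by blast
  have F_unit: "F (tensor_unit I Y algY y) = tensor_unit J X algX (g y)" if "y \<in> PiE I Y" for y
    using F_class[OF delta_in_fsdist[OF that]] by (simp add: tensor_unit_def Dmap_delta)
  have "G t = F t"
    if G: "convex_map (tensor_carrier I Y algY) (tensor_alg I Y algY)
                      (tensor_carrier J X algX) (tensor_alg J X algX) G"
      and G_unit: "\<forall>y\<in>PiE I Y. G (tensor_unit I Y algY y) = tensor_unit J X algX (g y)"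
      and t: "t \<in> tensor_carrier I Y algY" for G t
  proof (rule convex_map_quotient_eqI[OF ceY])
    show "convex_map (fsdist (PiE I Y) // ?EY) (quot_alg ?EY Dmult)
            (tensor_carrier J X algX) (tensor_alg J X algX) G"
      using G by (simp add: tensor_carrier_def tensor_alg_def)
    show "convex_map (fsdist (PiE I Y) // ?EY) (quot_alg ?EY Dmult)
            (tensor_carrier J X algX) (tensor_alg J X algX) F"
      using F by (simp add: tensor_carrier_def tensor_alg_def)
    show "G (?EY``{delta y}) = F (?EY``{delta y})" if "y \<in> PiE I Y" for y
      using G_unit F_unit[OF that] that by (simp add: tensor_unit_def)
  qed (use t in \<open>simp add: tensor_carrier_def\<close>)
  then show ?thesis using F F_unit by blast
qed

lemma block_map_funcset:
  assumes \<phi>: "\<phi> \<in> I \<rightarrow> J"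
    and f: "\<forall>j\<in>J. multiconvex {i\<in>I. \<phi> i = j} Y algY (X j) (algX j) (f j)"
  shows "block_map \<phi> I J f \<in> PiE I Y \<rightarrow> PiE J X"
proof
  fix y assume y: "y \<in> PiE I Y"
  have "f j (restrict y {i\<in>I. \<phi> i = j}) \<in> X j" if "j \<in> J" for j
    using f that y by (auto simp: multiconvex_def PiE_def Pi_def)
  then show "block_map \<phi> I J f y \<in> PiE J X" by (simp add: block_map_def)
qed

lemma block_map_tensor_gen:
  assumes fI: "finite I" and fJ: "finite J" and \<phi>: "\<phi> \<in> I \<rightarrow> J"
    and Yc: "\<forall>i\<in>I. convex_set (Y i) (algY i)" and Xc: "\<forall>j\<in>J. convex_set (X j) (algX j)"
    and f: "\<forall>j\<in>J. multiconvex {i\<in>I. \<phi> i = j} Y algY (X j) (algX j) (f j)"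
    and pq: "(p, q) \<in> tensor_gen I Y algY"
  shows "(Dmap (block_map \<phi> I J f) p, Dmap (block_map \<phi> I J f) q) \<in> tensor_gen J X algX"
proof -
  obtain r where p: "p = delta (\<lambda>i\<in>I. algY i (r i))" and q: "q = prod_dist I r"
    and r: "\<forall>i\<in>I. r i \<in> fsdist (Y i)"
    using pq unfolding tensor_gen_def by blast
  let ?S = "\<lambda>j. {i\<in>I. \<phi> i = j}"
  define s where "s j = Dmap (f j) (prod_dist (?S j) r)" for j
  have s: "\<forall>j\<in>J. s j \<in> fsdist (X j)"
  proof
    fix j assume "j \<in> J"
    then show "s j \<in> fsdist (X j)"
      unfolding s_def using fI r f
      by (intro Dmap_in_fsdist[OF prod_dist_in_fsdist]) (auto simp: multiconvex_def)
  qed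
  have "block_map \<phi> I J f (\<lambda>i\<in>I. algY i (r i)) = (\<lambda>j\<in>J. algX j (s j))"
  proof (rule ext)
    fix j
    have "f j (\<lambda>i\<in>?S j. algY i (r i)) = algX j (s j)" if "j \<in> J"
      unfolding s_def using fI Yc r f Xc that by (intro multiconvex_expand) auto
    moreover have "restrict (\<lambda>i\<in>I. algY i (r i)) (?S j) = (\<lambda>i\<in>?S j. algY i (r i))" by auto
    ultimately show "block_map \<phi> I J f (\<lambda>i\<in>I. algY i (r i)) j = (\<lambda>j\<in>J. algX j (s j)) j"
      by (simp add: block_map_def)
  qed
  moreover have "Dmap (block_map \<phi> I J f) q = prod_dist J s"
    unfolding q s_def using r by (intro Dmap_block_map_prod_dist[OF fI fJ \<phi>]) (auto simp: fsdist_def)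
  ultimately show ?thesis using s unfolding p tensor_gen_def by (auto simp: Dmap_delta)
qed

theorem mainTheorem16:
  fixes n m :: nat
    and \<phi> :: "nat \<Rightarrow> nat"
    and X :: "nat \<Rightarrow> 'a set" and algX :: "nat \<Rightarrow> ('a \<Rightarrow> 'r::comm_semiring_1) \<Rightarrow> 'a"
    and Y :: "nat \<Rightarrow> 'b set" and algY :: "nat \<Rightarrow> ('b \<Rightarrow> 'r) \<Rightarrow> 'b"
    and f :: "nat \<Rightarrow> (nat \<Rightarrow> 'b) \<Rightarrow> 'a"
  assumes semifield: "(0::'r) \<noteq> 1" "\<forall>x::'r. x \<noteq> 0 \<longrightarrow> (\<exists>y. x * y = 1)"
    and phi_surj: "\<phi> ` {1..n} = {1..m}"
    and X_convex: "\<forall>j\<in>{1..m}. convex_set (X j) (algX j)"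
    and Y_convex: "\<forall>i\<in>{1..n}. convex_set (Y i) (algY i)"
    and f_multiconvex: "\<forall>j\<in>{1..m}.
          multiconvex {i\<in>{1..n}. \<phi> i = j} Y algY (X j) (algX j) (f j)"
  shows "\<exists>F. convex_map (tensor_carrier {1..n} Y algY) (tensor_alg {1..n} Y algY)
                        (tensor_carrier {1..m} X algX) (tensor_alg {1..m} X algX) F
           \<and> (\<forall>y\<in>PiE {1..n} Y.
                F (tensor_unit {1..n} Y algY y)
                = tensor_unit {1..m} X algX
                    (\<lambda>j\<in>{1..m}. f j (restrict y {i\<in>{1..n}. \<phi> i = j})))
           \<and> (\<forall>G. convex_map (tensor_carrier {1..n} Y algY) (tensor_alg {1..n} Y algY)
                        (tensor_carrier {1..m} X algX) (tensor_alg {1..m} X algX) G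
                  \<and> (\<forall>y\<in>PiE {1..n} Y.
                       G (tensor_unit {1..n} Y algY y)
                       = tensor_unit {1..m} X algX
                           (\<lambda>j\<in>{1..m}. f j (restrict y {i\<in>{1..n}. \<phi> i = j})))
                  \<longrightarrow> (\<forall>t\<in>tensor_carrier {1..n} Y algY. G t = F t))"
proof -
  have \<phi>: "\<phi> \<in> {1..n} \<rightarrow> {1..m}" using phi_surj by blast
  have "(Dmap (block_map \<phi> {1..n} {1..m} f) p, Dmap (block_map \<phi> {1..n} {1..m} f) q)
          \<in> tensor_rel {1..m} X algX"
    if "(p, q) \<in> tensor_gen {1..n} Y algY" for p q
    using block_map_tensor_gen[OF _ _ \<phi> Y_convex X_convex f_multiconvex that]
      tensor_gen_subset_tensor_rel by blast
  from tensor_map_exists_unique[OF _ _ Y_convex X_convex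
      block_map_funcset[OF \<phi> f_multiconvex] this]
  show ?thesis unfolding block_map_def by simp
qed

end
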